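(* Let $M,N$ be positive integers, $0<z_0<\dots<z_{N-1}$ real with real positive $M$th roots, $(s^{(t)})_{t\in\mathbb Z}$ real with $s^{(t)}<z_0$, and $w^{(m)}_r>0$ ($r=0,\dots,N-1$, $m\in\mathbb Z$) with $w_r^{(m)}=w_r^{(m\bmod M)}$, such that the positivity condition \[ w^{(m)}_{r_0,\dots,r_{n-3},r_{n-2}}\,w^{(m+1)}_{r_0,\dots,r_{n-3},r_{n-1}}\,z_{r_{n-1}}^{1/M}>w^{(m+1)}_{r_0,\dots,r_{n-3},r_{n-2}}\,w^{(m)}_{r_0,\dots,r_{n-3},r_{n-1}}\,z_{r_{n-2}}^{1/M} \] holds for all $m=0,\dots,M-1$ and all $0\le r_0<\dots<r_{n-1}\le N-1$, $n=2,\dots,N$ (with the $w_{r_0,\dots,r_{n-1}}^{(m)}$ defined recursively as in the context). For $k,t\in\mathbb Z$ let $\tau^{(k,t)}_0:=1$, $\tau^{(k,t)}_n:=0$ for $n>N$, and for $1\le n\le N$ \[ \tau^{(k,t)}_n:=\sum_{0\le r_0<\dots<r_{n-1}\le N-1}w^{(k)}_{r_0}w^{(k+1)}_{r_0,r_1}\cdots w^{(k+n-1)}_{r_0,\dots,r_{n-1}}\prod_{j=0}^{n-1}\Big(z_{r_j}^{k/M}\prod_{\tau=0}^{t-1}(z_{r_j}-s^{(\tau)})\Big)\prod_{0\le i<j\le n-1}(z_{r_j}-z_{r_i}). \] Define, for $k,t\in\mathbb Z$, \[ q^{(k,t)}_n=\frac{\tau^{(k,t)}_n\tau^{(k+1,t)}_{n+1}}{\tau^{(k,t)}_{n+1}\tau^{(k+1,t)}_n},\quad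 d^{(k,t)}_n=\frac{\tau^{(k,t+1)}_n\tau^{(k+1,t)}_{n+1}}{\tau^{(k,t)}_{n+1}\tau^{(k+1,t+1)}_n}\quad(0\le n\le N-1), \] \[ e^{(k,t)}_n=\frac{\tau^{(k,t)}_{n+2}\tau^{(k+M,t)}_n}{\tau^{(k,t)}_{n+1}\tau^{(k+M,t)}_{n+1}},\quad \tilde e^{(k,t)}_n=\frac{\tau^{(k,t)}_{n+2}\tau^{(k,t+1)}_n}{\tau^{(k,t)}_{n+1}\tau^{(k,t+1)}_{n+1}},\quad f^{(k,t)}_n=-s^{(t)}\frac{\tau^{(k,t)}_{n+2}\tau^{(k+M,t+1)}_n}{\tau^{(k,t+1)}_{n+1}\tau^{(k+M,t)}_{n+1}}\quad(0\le n\le N-1). \] Then these variables solve the nonautonomous discrete hungry Toda lattice with finite lattice boundary condition: for all $k,t\in\mathbb Z$, $e^{(k,t)}_{N-1}=\tilde e^{(k,t)}_{N-1}=0$, \begin{gather*} q^{(k,t+1)}_n=d^{(k,t)}_n+\tilde e^{(k,t)}_n,\quad e^{(k,t+1)}_n=f^{(k,t)}_n+\tilde e^{(k+M,t)}_n\quad(0\le n\le N-1),\\ d^{(k,t)}_{n+1}=d^{(k,t)}_n\frac{q^{(k,t)}_{n+1}}{q^{(k,t+1)}_n},\quad f^{(k,t)}_{n+1}=f^{(k,t)}_n\frac{e^{(k,t)}_{n+1}}{e^{(k,t+1)}_n},\quad \tilde e^{(k+1,t)}_n=\tilde e^{(k,t)}_n\frac{q^{(k,t)}_{n+1}}{q^{(k,t+1)}_n},\quad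 \tilde e^{(k,t)}_{n+1}=\tilde e^{(k+M,t)}_n\frac{e^{(k,t)}_{n+1}}{e^{(k,t+1)}_n}\quad(0\le n\le N-2), \end{gather*} with boundary conditions \[ d^{(k,t)}_0=q^{(k,t)}_0,\quad f^{(k,t)}_0=\frac{-e^{(k,t)}_0s^{(t)}}{\prod_{j=0}^{M-1}q^{(k+j,t)}_0-s^{(t)}},\quad \tilde e^{(k,t)}_0=\frac{e^{(k,t)}_0\prod_{j=0}^{M-1}q^{(k+j,t)}_0}{\prod_{j=0}^{M-1}q^{(k+j,t)}_0-s^{(t)}}. \] Moreover $q^{(k,t)}_n,d^{(k,t)}_n>0$ for $0\le n\le N-1$ and $e^{(k,t)}_n,\tilde e^{(k,t)}_n>0$ for $0\le n\le N-2$; and if $s^{(t)}\le0$ for all $t$, then $f^{(k,t)}_n\ge0$ for all $k,t$ and $0\le n\le N-1$.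
   Context: The numbers $w^{(m)}_{r_0,\dots,r_{n-1}}$ for $n\ge2$, $0\le r_0<\dots<r_{n-1}\le N-1$, $m\in\mathbb Z$ are defined recursively by \[ w^{(m+1)}_{r_0,\dots,r_{n-2},r_{n-1}}:=\frac{w^{(m)}_{r_0,\dots,r_{n-3},r_{n-2}}w^{(m+1)}_{r_0,\dots,r_{n-3},r_{n-1}}z_{r_{n-1}}^{1/M}-w^{(m+1)}_{r_0,\dots,r_{n-3},r_{n-2}}w^{(m)}_{r_0,\dots,r_{n-3},r_{n-1}}z_{r_{n-2}}^{1/M}}{w^{(m)}_{r_0,\dots,r_{n-3},r_{n-2}}}, \] where for $n=2$ the list $r_0,\dots,r_{n-3}$ is empty. Products $\prod_{\tau=0}^{t-1}a_\tau$ equal $1$ for $t=0$ and $\prod_{\tau=t}^{-1}a_\tau^{-1}$ for $t<0$. *)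

theory Defs
  imports Complex_Main
begin

definition zroot :: "nat \<Rightarrow> (nat \<Rightarrow> real) \<Rightarrow> nat \<Rightarrow> real" where
  "zroot M z r = root M (z r)"

text \<open>The recursively defined numbers w, indexed by the REVERSED index list
  [r_{n-1}, r_{n-2}, ..., r_0]; the base weights are w m r.\<close>
fun wrev :: "(int \<Rightarrow> nat \<Rightarrow> real) \<Rightarrow> (nat \<Rightarrow> real) \<Rightarrow> nat \<Rightarrow> int \<Rightarrow> nat list \<Rightarrow> real" where
  "wrev w z M m [] = 1"
| "wrev w z M m [r] = w m r"
| "wrev w z M m (b # a # p) =
     (wrev w z M (m - 1) (a # p) * wrev w z M m (b # p) * zroot M z b
      - wrev w z M m (a # p) * wrev w z M (m - 1) (b # p) * zroot M z a)
     / wrev w z M (m - 1) (a # p)"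

definition wseq :: "(int \<Rightarrow> nat \<Rightarrow> real) \<Rightarrow> (nat \<Rightarrow> real) \<Rightarrow> nat \<Rightarrow> int \<Rightarrow> nat list \<Rightarrow> real" where
  "wseq w z M m rs = wrev w z M m (rev rs)"

definition gprod :: "(int \<Rightarrow> real) \<Rightarrow> int \<Rightarrow> real" where
  "gprod a t = (if 0 \<le> t then (\<Prod>\<tau>\<in>{0..<t}. a \<tau>) else (\<Prod>\<tau>\<in>{t..<0}. inverse (a \<tau>)))"

text \<open>tau^{(k,t)}_n; the sum over 0 <= r_0 < ... < r_{n-1} <= N-1 is a sum over
  n-element subsets S of {0..N-1}, with rs the increasing enumeration of S.\<close>
definition tau :: "(int \<Rightarrow> nat \<Rightarrow> real) \<Rightarrow> (nat \<Rightarrow> real) \<Rightarrow> (int \<Rightarrow> real) \<Rightarrow> nat \<Rightarrow> nat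
                    \<Rightarrow> int \<Rightarrow> int \<Rightarrow> nat \<Rightarrow> real" where
  "tau w z s M N k t n =
    (if n = 0 then 1 else if N < n then 0 else
     (\<Sum>S\<in>{S. S \<subseteq> {..<N} \<and> card S = n}.
        let rs = sorted_list_of_set S in
        (\<Prod>j<n. wseq w z M (k + int j) (take (Suc j) rs))
        * (\<Prod>j<n. z (rs ! j) powr (real_of_int k / real M)
                   * gprod (\<lambda>\<tau>. z (rs ! j) - s \<tau>) t)
        * (\<Prod>j<n. \<Prod>i<j. z (rs ! j) - z (rs ! i))))"

definition qv where
  "qv w z s M N k t n = tau w z s M N k t n * tau w z s M N (k+1) t (n+1)
      / (tau w z s M N k t (n+1) * tau w z s M N (k+1) t n)"

definition dv where
  "dv w z s M N k t n = tau w z s M N k (t+1) n * tau w z s M N (k+1) t (n+1)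
      / (tau w z s M N k t (n+1) * tau w z s M N (k+1) (t+1) n)"

definition ev where
  "ev w z s M N k t n = tau w z s M N k t (n+2) * tau w z s M N (k + int M) t n
      / (tau w z s M N k t (n+1) * tau w z s M N (k + int M) t (n+1))"

definition etv where
  "etv w z s M N k t n = tau w z s M N k t (n+2) * tau w z s M N k (t+1) n
      / (tau w z s M N k t (n+1) * tau w z s M N k (t+1) (n+1))"

definition fv where
  "fv w z s M N k t n = - s t * (tau w z s M N k t (n+2) * tau w z s M N (k + int M) (t+1) n
      / (tau w z s M N k (t+1) (n+1) * tau w z s M N (k + int M) t (n+1)))"

end

theory Submission
  imports Defs "Jordan_Normal_Form.Determinant"
begin

text \<open>By the Cauchy--Binet formula, \<open>\<tau>\<^sub>n(k, t)\<close> is the \<open>n \<times> n\<close> determinant of the moments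
  \<open>\<Sum>\<^sub>r \<psi>\<^sub>r(k + i) g\<^sub>r(t) z\<^sub>r\<^sup>j\<close>, where \<open>\<psi>\<^sub>r(m) = w\<^sub>r(m) z\<^sub>r\<^sup>m\<^sup>/\<^sup>M\<close> and
  \<open>g\<^sub>r(t) = \<Prod>\<^sub>\<tau>(z\<^sub>r - s(\<tau>))\<close>: the Casorati minors of \<open>\<psi>\<close> are the products of \<open>w\<close>'s,
  because a Desnanot--Jacobi recurrence for them mirrors the recursive definition of \<open>w\<close>, and the
  powers \<open>z\<^sub>r\<^sup>j\<close> contribute a Vandermonde factor. Replacing \<open>k\<close> by \<open>k + 1\<close> drops the first row of the
  moment matrix, \<open>k + M\<close> shifts its columns and \<open>t + 1\<close> borders it with a geometric row, so the
  bilinear equations for \<open>\<tau>\<close> are three-term Pluecker relations and the Toda equations follow by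
  division. Every summand of \<open>\<tau>\<close> is positive by the positivity condition and the ordering of
  the \<open>z\<^sub>r\<close> and \<open>s(t)\<close>, so \<open>\<tau>\<^sub>n > 0\<close> for \<open>n \<le> N\<close>.\<close>

definition det_rows :: "(nat \<Rightarrow> 'a::comm_ring_1) list \<Rightarrow> 'a" where
  "det_rows xs = det (mat (length xs) (length xs) (\<lambda>(i, j). (xs ! i) j))"

definition unit_row :: "nat \<Rightarrow> nat \<Rightarrow> 'a::comm_ring_1" where
  "unit_row i = (\<lambda>j. of_bool (j = i))"

definition shift_row :: "(nat \<Rightarrow> 'a) \<Rightarrow> nat \<Rightarrow> 'a" where
  "shift_row v = (\<lambda>j. v (Suc j))"

definition geometric_row :: "'a::comm_ring_1 \<Rightarrow> nat \<Rightarrow> 'a" where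
  "geometric_row \<sigma> = (\<lambda>j. \<sigma> ^ j)"

definition last_row_cofactor :: "(nat \<Rightarrow> 'a::comm_ring_1) list \<Rightarrow> nat \<Rightarrow> 'a" where
  "last_row_cofactor xs j = (-1) ^ (length xs + j) *
     det (mat (length xs) (length xs) (\<lambda>(i, j'). (xs ! i) (if j' < j then j' else Suc j')))"

lemma det_rows_Nil [simp]: "det_rows [] = 1"
  unfolding det_rows_def by simp

lemma det_rows_snoc_laplace:
  "det_rows (xs @ [v]) = (\<Sum>j<Suc (length xs). v j * last_row_cofactor xs j)"
proof -
  let ?n = "length xs"
  define A where "A = mat (Suc ?n) (Suc ?n) (\<lambda>(i, j). ((xs @ [v]) ! i) j)"
  have A: "A \<in> carrier_mat (Suc ?n) (Suc ?n)" unfolding A_def by simp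
  have "det_rows (xs @ [v]) = det A" unfolding det_rows_def A_def by simp
  also have "\<dots> = (\<Sum>j<Suc ?n. A $$ (?n, j) * cofactor A ?n j)"
    by (rule laplace_expansion_row[OF A]) simp
  also have "\<dots> = (\<Sum>j<Suc ?n. v j * last_row_cofactor xs j)"
  proof (rule sum.cong[OF refl])
    fix j assume j: "j \<in> {..<Suc ?n}"
    have "mat_delete A ?n j = mat ?n ?n (\<lambda>(i, j'). (xs ! i) (if j' < j then j' else Suc j'))"
      unfolding mat_delete_def A_def using j by (intro eq_matI) (auto simp: nth_append)
    then show "A $$ (?n, j) * cofactor A ?n j = v j * last_row_cofactor xs j"
      unfolding cofactor_def last_row_cofactor_def A_def using j by simp
  qed
  finally show ?thesis .
qed

lemma det_rows_single [simp]: "det_rows [v] = v 0"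
  using det_rows_snoc_laplace[of "[]" v] by (simp add: last_row_cofactor_def)

lemma det_rows_snoc_unit_row_length: "det_rows (xs @ [unit_row (length xs)]) = det_rows xs"
proof -
  have "det_rows (xs @ [unit_row (length xs)]) = last_row_cofactor xs (length xs)"
    unfolding det_rows_snoc_laplace unit_row_def by (simp add: Int_def Collect_conv_if)
  also have "\<dots> = det_rows xs"
    unfolding last_row_cofactor_def det_rows_def
    by (simp add: power_add[symmetric] mult_2[symmetric], intro arg_cong[of _ _ det] eq_matI, auto)
  finally show ?thesis .
qed

lemma det_rows_snoc_unit_row_0:
  "det_rows (xs @ [unit_row 0]) = (-1) ^ length xs * det_rows (map shift_row xs)"
proof -
  have "det_rows (xs @ [unit_row 0]) = last_row_cofactor xs 0"
    unfolding det_rows_snoc_laplace unit_row_def by (simp add: Int_def Collect_conv_if)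
  also have "\<dots> = (-1) ^ length xs * det_rows (map shift_row xs)"
    unfolding last_row_cofactor_def det_rows_def shift_row_def
    by (simp, intro arg_cong[of _ _ "\<lambda>X. (-1) ^ length xs * det X"] eq_matI) auto
  finally show ?thesis .
qed

lemma det_rows_snoc_scaled: "det_rows (xs @ [\<lambda>j. c * v j]) = c * det_rows (xs @ [v])"
  unfolding det_rows_snoc_laplace by (subst sum_distrib_left) (simp add: mult_ac del: sum.lessThan_Suc)

lemma det_rows_repeated_row:
  assumes "i < j" "j < length xs" "xs ! i = xs ! j"
  shows "det_rows xs = 0"
  unfolding det_rows_def by (rule det_identical_rows[of _ "length xs" i j]) (use assms in auto)

lemma det_rows_permute:
  assumes p: "p permutes {0..<length xs}"
  shows "det_rows (map (\<lambda>i. xs ! p i) [0..<length xs]) = signof p * det_rows xs"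
proof -
  let ?A = "mat (length xs) (length xs) (\<lambda>(i, j). (xs ! i) j)"
  have "det_rows (map (\<lambda>i. xs ! p i) [0..<length xs])
      = det (mat (length xs) (length xs) (\<lambda>(i, j). ?A $$ (p i, j)))"
    unfolding det_rows_def using permutes_in_image[OF p]
    by (intro arg_cong[of _ _ det] eq_matI) auto
  also have "\<dots> = signof p * det_rows xs"
    unfolding det_rows_def by (rule det_permute_rows[OF _ p]) simp
  finally show ?thesis .
qed

lemma det_rows_swap: "det_rows (pre @ a # b # post) = - det_rows (pre @ b # a # post)"
proof -
  let ?xs = "pre @ b # a # post"
  let ?p = "Transposition.transpose (length pre) (Suc (length pre))"
  have p: "?p permutes {0..<length ?xs}" by (rule permutes_swap_id) auto
  have e: "map (\<lambda>i. ?xs ! ?p i) [0..<length ?xs] = pre @ a # b # post"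
  proof (rule nth_equalityI)
    fix i assume "i < length (map (\<lambda>i. ?xs ! ?p i) [0..<length ?xs])"
    then have m: "map (\<lambda>i. ?xs ! ?p i) [0..<length ?xs] ! i = ?xs ! ?p i"
      by (simp del: upt_Suc)
    consider "i < length pre" | "i = length pre" | "i = Suc (length pre)" | "Suc (length pre) < i"
      by linarith
    then show "map (\<lambda>i. ?xs ! ?p i) [0..<length ?xs] ! i = (pre @ a # b # post) ! i"
    proof cases
      case 4
      then obtain d where d: "i = length pre + Suc (Suc d)"
        by (metis add_Suc_right less_iff_Suc_add add.commute add_Suc)
      have "?p i = i" using 4 by (simp add: transpose_def)
      moreover have "?xs ! i = (pre @ a # b # post) ! i"
        unfolding d nth_append_length_plus by simp
      ultimately show ?thesis using m by simp
    next
      case 1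
      then have "?p i = i" by (simp add: transpose_def)
      then show ?thesis using m 1 by (simp add: nth_append)
    next
      case 2
      then have "?p i = Suc (length pre)" by (simp add: transpose_def)
      then show ?thesis using m 2 by (simp add: nth_append)
    next
      case 3
      then have "?p i = length pre" by (simp add: transpose_def)
      then show ?thesis using m 3 by (simp add: nth_append)
    qed
  qed simp
  have "det_rows (pre @ a # b # post) = signof ?p * det_rows ?xs"
    unfolding e[symmetric] by (rule det_rows_permute[OF p])
  then show ?thesis by (simp add: sign_swap_id)
qed

lemma det_rows_move:
  "det_rows (pre @ x # A @ post) = (-1) ^ length A * det_rows (pre @ A @ x # post)"
proof (induction A arbitrary: pre)
  case (Cons y A)
  have "det_rows (pre @ x # (y # A) @ post) = - det_rows ((pre @ [y]) @ x # A @ post)"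
    using det_rows_swap[of pre x y "A @ post"] by simp
  also have "\<dots> = - ((-1) ^ length A * det_rows ((pre @ [y]) @ A @ x # post))"
    by (simp only: Cons.IH)
  finally show ?case by simp
qed simp

lemma det_rows_leibniz:
  "det_rows (map g [0..<n]) = (\<Sum>p | p permutes {0..<n}. signof p * (\<Prod>i = 0..<n. g i (p i)))"
proof -
  have A: "mat n n (\<lambda>(i, j). g i j) \<in> carrier_mat n n" by simp
  have "det_rows (map g [0..<n]) = det (mat n n (\<lambda>(i, j). g i j))"
    unfolding det_rows_def by (intro arg_cong[of _ _ det] eq_matI) auto
  also have "\<dots> = (\<Sum>p | p permutes {0..<n}. signof p * (\<Prod>i = 0..<n. g i (p i)))"
    unfolding det_def'[OF A]
    by (intro sum.cong refl arg_cong[of _ _ "\<lambda>x. _ * x"] prod.cong) (auto dest: permutes_in_image)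
  finally show ?thesis .
qed

lemma det_rows_leibniz_columns:
  assumes "length xs = n"
  shows "det_rows (map a xs) = (\<Sum>p | p permutes {0..<n}. signof p * (\<Prod>i = 0..<n. a (xs ! p i) i))"
proof -
  have A: "mat n n (\<lambda>(i, j). a (xs ! j) i) \<in> carrier_mat n n" by simp
  have "det_rows (map a xs) = det (transpose_mat (mat n n (\<lambda>(i, j). a (xs ! j) i)))"
    unfolding det_rows_def using assms by (intro arg_cong[of _ _ det] eq_matI) auto
  also have "\<dots> = (\<Sum>p | p permutes {0..<n}. signof p * (\<Prod>i = 0..<n. a (xs ! p i) i))"
    unfolding det_transpose[OF A] det_def'[OF A]
    by (intro sum.cong refl arg_cong[of _ _ "\<lambda>x. _ * x"] prod.cong) (auto dest: permutes_in_image)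
  finally show ?thesis .
qed

lemma det_rows_scale_rows:
  "det_rows (map (\<lambda>r j. c r * f r j) xs) = prod_list (map c xs) * det_rows (map f xs)"
proof -
  have enum: "map h xs = map (\<lambda>i. h (xs ! i)) [0..<length xs]" for h :: "'b \<Rightarrow> nat \<Rightarrow> 'a"
    by (rule nth_equalityI) simp_all
  have "det_rows (map (\<lambda>r j. c r * f r j) xs)
      = (\<Sum>p | p permutes {0..<length xs}. signof p * (\<Prod>i = 0..<length xs. c (xs ! i) * f (xs ! i) (p i)))"
    by (subst enum) (rule det_rows_leibniz)
  also have "\<dots> = (\<Prod>i = 0..<length xs. c (xs ! i))
      * (\<Sum>p | p permutes {0..<length xs}. signof p * (\<Prod>i = 0..<length xs. f (xs ! i) (p i)))"
    by (simp add: sum_distrib_left prod.distrib mult_ac)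
  also have "\<dots> = prod_list (map c xs) * det_rows (map f xs)"
    unfolding enum[of f] det_rows_leibniz by (simp add: prod.list_conv_set_nth)
  finally show ?thesis .
qed

lemma det_rows_orthogonal_vanishes:
  fixes R :: "(nat \<Rightarrow> 'a::idom) list"
  assumes nonsingular: "det_rows R \<noteq> 0"
    and orthogonal: "\<And>i. i < length R \<Longrightarrow> (\<Sum>j<length R. (R ! i) j * \<phi> j) = 0"
    and j: "j < length R"
  shows "\<phi> j = 0"
proof -
  let ?m = "length R"
  define X where "X = mat ?m ?m (\<lambda>(i, j). (R ! i) j)"
  have X: "X \<in> carrier_mat ?m ?m" unfolding X_def by simp
  have "X *\<^sub>v vec ?m \<phi> = 0\<^sub>v ?m"
  proof (rule eq_vecI)
    fix i assume "i < dim_vec (0\<^sub>v ?m :: 'a vec)"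
    then have i: "i < ?m" by simp
    have "(X *\<^sub>v vec ?m \<phi>) $ i = (\<Sum>j<?m. (R ! i) j * \<phi> j)"
      using i unfolding X_def by (simp add: scalar_prod_def atLeast0LessThan)
    then show "(X *\<^sub>v vec ?m \<phi>) $ i = 0\<^sub>v ?m $ i" using orthogonal[OF i] i by simp
  qed (simp add: X_def)
  moreover have "det X \<noteq> 0" using nonsingular unfolding det_rows_def X_def .
  ultimately have "vec ?m \<phi> = 0\<^sub>v ?m"
    using det_0_iff_vec_prod_zero[OF X] vec_carrier[of ?m \<phi>] by blast
  then show ?thesis using j by (metis index_vec index_zero_vec(1))
qed

lemma det_rows_snoc_repeated:
  assumes "y \<in> set (A @ [x])"
  shows "det_rows (A @ [x, y]) = 0"
proof -
  obtain i where i: "i < length (A @ [x])" "(A @ [x]) ! i = y"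
    using assms[unfolded in_set_conv_nth] by blast
  have "(A @ [x, y]) ! i = (A @ [x, y]) ! Suc (length A)"
    using i by (cases "i < length A") (auto simp: nth_append)
  then show ?thesis
    by (intro det_rows_repeated_row[of i "Suc (length A)"]) (use i in simp_all)
qed

lemma det_rows_snoc_swap: "det_rows (A @ [x, y]) = - det_rows (A @ [y, x])"
  using det_rows_swap[of A x y "[]"] by simp

text \<open>With \<open>d\<close> replaced by a variable row \<open>x\<close>, the left-hand side is a linear form in \<open>x\<close> vanishing
  on the rows of \<open>A\<close>, \<open>a\<close>, \<open>b\<close>, \<open>c\<close>. If one of its coefficients \<open>det_rows (A @ [_, _])\<close> is nonzero,
  these rows contain a basis, so the form is zero.\<close>

lemma det_rows_pluecker:
  fixes a b c d :: "nat \<Rightarrow> 'a::idom"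
  shows "det_rows (A @ [a, b]) * det_rows (A @ [c, d]) - det_rows (A @ [a, c]) * det_rows (A @ [b, d])
    + det_rows (A @ [a, d]) * det_rows (A @ [b, c]) = 0"
proof -
  define m where "m = Suc (Suc (length A))"
  define \<phi> where "\<phi> j = det_rows (A @ [a, b]) * last_row_cofactor (A @ [c]) j
      - det_rows (A @ [a, c]) * last_row_cofactor (A @ [b]) j
      + det_rows (A @ [b, c]) * last_row_cofactor (A @ [a]) j" for j
  define F where "F x = det_rows (A @ [a, b]) * det_rows (A @ [c, x])
      - det_rows (A @ [a, c]) * det_rows (A @ [b, x]) + det_rows (A @ [b, c]) * det_rows (A @ [a, x])" for x
  have F_linear: "F x = (\<Sum>j<m. x j * \<phi> j)" for x
  proof -
    have laplace: "det_rows (A @ [y, x]) = (\<Sum>j<m. x j * last_row_cofactor (A @ [y]) j)" for y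
      using det_rows_snoc_laplace[of "A @ [y]" x] unfolding m_def by simp
    show ?thesis unfolding F_def \<phi>_def laplace
      by (simp add: sum_distrib_left sum_subtractf sum.distrib[symmetric] algebra_simps)
  qed
  have F_zero: "F y = 0" if y: "y \<in> set A \<union> {a, b, c}" for y
  proof -
    consider "y \<in> set A" | "y = a" | "y = b" | "y = c" using y by auto
    then show ?thesis
    proof cases
      case 1
      then show ?thesis unfolding F_def by (simp add: det_rows_snoc_repeated)
    next
      case 2
      then show ?thesis unfolding F_def
        by (simp add: det_rows_snoc_swap[of A c a] det_rows_snoc_swap[of A b a] det_rows_snoc_repeated)
    next
      case 3
      then show ?thesis unfolding F_def
        by (simp add: det_rows_snoc_swap[of A c b] det_rows_snoc_repeated)
    next
      case 4
      then show ?thesis unfolding F_def by (simp add: det_rows_snoc_repeated)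
    qed
  qed
  have "F d = 0" if R: "R \<in> {A @ [a, b], A @ [a, c], A @ [b, c]}" "det_rows R \<noteq> 0" for R
  proof -
    have len: "length R = m" using R(1) by (auto simp: m_def)
    have rows: "set R \<subseteq> set A \<union> {a, b, c}" using R(1) by auto
    have "\<phi> j = 0" if "j < m" for j
    proof (rule det_rows_orthogonal_vanishes)
      fix i assume "i < length R"
      then have "R ! i \<in> set A \<union> {a, b, c}" using rows by (meson nth_mem subsetD)
      then show "(\<Sum>j<length R. (R ! i) j * \<phi> j) = 0"
        unfolding len using F_zero F_linear by metis
    qed (use R(2) \<open>j < m\<close> len in auto)
    then show ?thesis unfolding F_linear by simp
  qed
  moreover have "F d = 0"
    if "det_rows (A @ [a, b]) = 0" "det_rows (A @ [a, c]) = 0" "det_rows (A @ [b, c]) = 0"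
    using that unfolding F_def by simp
  ultimately have "F d = 0" by blast
  then show ?thesis unfolding F_def by (simp add: mult.commute)
qed

lemma sum_times_bidiagonal:
  fixes g :: "nat \<Rightarrow> 'a::comm_ring_1"
  assumes "j < m"
  shows "(\<Sum>l<m. g l * (if l = j then 1 else if Suc l = j then - \<sigma> else 0)) =
    (if j = 0 then g 0 else g j - \<sigma> * g (j - 1))"
proof -
  have "(\<Sum>l<m. g l * (if l = j then 1 else if Suc l = j then - \<sigma> else 0)) =
        (\<Sum>l<m. if l = j then g l else 0) + (\<Sum>l<m. if Suc l = j then - \<sigma> * g l else 0)"
    by (subst sum.distrib[symmetric]) (rule sum.cong, auto)
  also have "(\<Sum>l<m. if l = j then g l else 0) = g j" using assms by simp
  also have "(\<Sum>l<m. if Suc l = j then - \<sigma> * g l else 0) = (if j = 0 then 0 else - \<sigma> * g (j - 1))"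
  proof (cases j)
    case (Suc j')
    then have "(\<Sum>l<m. if Suc l = j then - \<sigma> * g l else 0) = (\<Sum>l<m. if l = j' then - \<sigma> * g l else 0)"
      by (intro sum.cong) auto
    then show ?thesis using assms Suc by simp
  qed simp
  finally show ?thesis by auto
qed

text \<open>Subtracting \<open>\<sigma>\<close> times each column from the next one (right multiplication by a unipotent
  bidiagonal matrix) turns the last row into a unit vector.\<close>

lemma det_rows_snoc_geometric_row:
  "det_rows (xs @ [geometric_row \<sigma>]) = (-1) ^ length xs * det_rows (map (\<lambda>v j. v (Suc j) - \<sigma> * v j) xs)"
proof -
  let ?n = "length xs"
  define X where "X = mat (Suc ?n) (Suc ?n) (\<lambda>(i, j). ((xs @ [geometric_row \<sigma>]) ! i) j)"
  define U where "U = mat (Suc ?n) (Suc ?n) (\<lambda>(i, j). if i = j then 1 else if Suc i = j then - \<sigma> else 0)"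
  define ys where "ys = map (\<lambda>v j. if j = 0 then v 0 else v j - \<sigma> * v (j - 1)) xs @ [unit_row 0]"
  have X: "X \<in> carrier_mat (Suc ?n) (Suc ?n)" and U: "U \<in> carrier_mat (Suc ?n) (Suc ?n)"
    unfolding X_def U_def by simp_all
  have "det U = 1"
    by (subst det_upper_triangular[OF _ U]) (auto simp: U_def upper_triangular_def prod_list_diag_prod)
  have XU: "X * U = mat (Suc ?n) (Suc ?n) (\<lambda>(i, j). (ys ! i) j)"
  proof (rule eq_matI)
    fix i j assume "i < dim_row (mat (Suc ?n) (Suc ?n) (\<lambda>(i, j). (ys ! i) j))"
      and "j < dim_col (mat (Suc ?n) (Suc ?n) (\<lambda>(i, j). (ys ! i) j))"
    then have i: "i < Suc ?n" and j: "j < Suc ?n" by auto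
    let ?r = "(xs @ [geometric_row \<sigma>]) ! i"
    have "(X * U) $$ (i, j) = (\<Sum>l<Suc ?n. ?r l * (if l = j then 1 else if Suc l = j then - \<sigma> else 0))"
      using i j unfolding X_def U_def
      by (simp add: scalar_prod_def atLeast0LessThan del: sum.lessThan_Suc)
    also have "\<dots> = (if j = 0 then ?r 0 else ?r j - \<sigma> * ?r (j - 1))"
      by (rule sum_times_bidiagonal[OF j])
    also have "\<dots> = (ys ! i) j"
      using i unfolding ys_def geometric_row_def unit_row_def
      by (cases "i < ?n"; cases j) (auto simp: nth_append)
    finally show "(X * U) $$ (i, j) = mat (Suc ?n) (Suc ?n) (\<lambda>(i, j). (ys ! i) j) $$ (i, j)"
      using i j by simp
  qed (auto simp: X_def U_def)
  have "det_rows (xs @ [geometric_row \<sigma>]) = det (X * U)"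
    using det_mult[OF X U] \<open>det U = 1\<close> unfolding det_rows_def X_def by simp
  also have "\<dots> = det_rows ys" unfolding XU det_rows_def ys_def by simp
  also have "\<dots> = (-1) ^ length xs * det_rows (map (\<lambda>v j. v (Suc j) - \<sigma> * v j) xs)"
    unfolding ys_def det_rows_snoc_unit_row_0 by (simp add: shift_row_def o_def)
  finally show ?thesis .
qed

lemma det_sum_products_expand:
  fixes a b :: "'b \<Rightarrow> nat \<Rightarrow> 'a::comm_ring_1"
  assumes "finite A"
  shows "det (mat n n (\<lambda>(i, j). \<Sum>r\<in>A. a r i * b r j)) =
    (\<Sum>f\<in>PiE {0..<n} (\<lambda>_. A). (\<Prod>i = 0..<n. a (f i) i) * det_rows (map (\<lambda>i. b (f i)) [0..<n]))"
proof -
  let ?F = "PiE {0..<n} (\<lambda>_. A)"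
  have "det (mat n n (\<lambda>(i, j). \<Sum>r\<in>A. a r i * b r j)) =
      det_rows (map (\<lambda>i j. \<Sum>r\<in>A. a r i * b r j) [0..<n])"
    unfolding det_rows_def by (intro arg_cong[of _ _ det] eq_matI) auto
  also have "\<dots> = (\<Sum>p | p permutes {0..<n}. signof p * (\<Prod>i = 0..<n. \<Sum>r\<in>A. a r i * b r (p i)))"
    by (rule det_rows_leibniz)
  also have "\<dots> = (\<Sum>p | p permutes {0..<n}. \<Sum>f\<in>?F. signof p * (\<Prod>i = 0..<n. a (f i) i * b (f i) (p i)))"
    by (subst prod_sum_PiE) (simp_all add: assms sum_distrib_left)
  also have "\<dots> = (\<Sum>f\<in>?F. \<Sum>p | p permutes {0..<n}. signof p * (\<Prod>i = 0..<n. a (f i) i * b (f i) (p i)))"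
    by (rule sum.swap)
  also have "\<dots> = (\<Sum>f\<in>?F. (\<Prod>i = 0..<n. a (f i) i) * det_rows (map (\<lambda>i. b (f i)) [0..<n]))"
    unfolding det_rows_leibniz
    by (intro sum.cong refl) (simp add: sum_distrib_left prod.distrib mult_ac)
  finally show ?thesis .
qed

lemma sorted_enumeration_permuted:
  fixes S :: "'b::linorder set"
  assumes "finite S" "card S = n" "p permutes {0..<n}"
  shows "inj_on (\<lambda>i. sorted_list_of_set S ! p i) {0..<n}"
    and "(\<lambda>i. sorted_list_of_set S ! p i) ` {0..<n} = S"
proof -
  let ?xs = "sorted_list_of_set S"
  have xs: "distinct ?xs" "set ?xs = S" "length ?xs = n" using assms by auto
  show "inj_on (\<lambda>i. ?xs ! p i) {0..<n}"
  proof (rule inj_onI)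
    fix i j assume "i \<in> {0..<n}" "j \<in> {0..<n}" "?xs ! p i = ?xs ! p j"
    moreover have "p i < n" "p j < n"
      using \<open>i \<in> _\<close> \<open>j \<in> _\<close> permutes_in_image[OF assms(3)] by auto
    ultimately have "p i = p j" using xs by (simp add: nth_eq_iff_index_eq)
    then show "i = j" using permutes_inj[OF assms(3)] by (simp add: inj_eq)
  qed
  have "(\<lambda>i. ?xs ! p i) ` {0..<n} = (!) ?xs ` (p ` {0..<n})" by auto
  also have "\<dots> = set ?xs"
    using permutes_image[OF assms(3)] xs(3) by (auto simp: atLeast0LessThan in_set_conv_nth)
  finally show "(\<lambda>i. ?xs ! p i) ` {0..<n} = S" using xs(2) by simp
qed

lemma inj_on_permuted_sorted_enumerations:
  fixes A :: "'b::linorder set"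
  assumes "finite A"
  shows "inj_on (\<lambda>(S, p). restrict (\<lambda>i. sorted_list_of_set S ! p i) {0..<n})
    (SIGMA S:{S. S \<subseteq> A \<and> card S = n}. {p. p permutes {0..<n}})"
proof (rule inj_onI)
  fix x y
  assume "x \<in> (SIGMA S:{S. S \<subseteq> A \<and> card S = n}. {p. p permutes {0..<n}})"
    and "y \<in> (SIGMA S:{S. S \<subseteq> A \<and> card S = n}. {p. p permutes {0..<n}})"
    and "(\<lambda>(S, p). restrict (\<lambda>i. sorted_list_of_set S ! p i) {0..<n}) x
      = (\<lambda>(S, p). restrict (\<lambda>i. sorted_list_of_set S ! p i) {0..<n}) y"
  then obtain S p S' p' where xy: "x = (S, p)" "y = (S', p')"
    and S: "S \<subseteq> A" "card S = n" "p permutes {0..<n}"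
    and S': "S' \<subseteq> A" "card S' = n" "p' permutes {0..<n}"
    and eq: "restrict (\<lambda>i. sorted_list_of_set S ! p i) {0..<n}
      = restrict (\<lambda>i. sorted_list_of_set S' ! p' i) {0..<n}"
    by auto
  have fin: "finite S" "finite S'" using S(1) S'(1) assms finite_subset by blast+
  have "S = S'"
    using sorted_enumeration_permuted(2)[OF fin(1) S(2-)] sorted_enumeration_permuted(2)[OF fin(2) S'(2-)]
      restrict_ext image_cong eq by (metis (no_types, lifting) restrict_apply')
  moreover have "p i = p' i" for i
  proof (cases "i < n")
    case True
    then have "sorted_list_of_set S ! p i = sorted_list_of_set S ! p' i"
      using fun_cong[OF eq, of i] \<open>S = S'\<close> by simp
    moreover have "p i < n" "p' i < n"
      using True permutes_in_image[OF S(3)] permutes_in_image[OF S'(3)] by auto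
    ultimately show ?thesis using S fin by (simp add: nth_eq_iff_index_eq)
  qed (use S(3) S'(3) in \<open>simp add: permutes_def\<close>)
  ultimately show "x = y" unfolding xy by auto
qed

lemma injection_eq_permuted_sorted_enumeration:
  fixes f :: "nat \<Rightarrow> 'b::linorder"
  assumes f: "f \<in> PiE {0..<n} (\<lambda>_. A)" and inj: "inj_on f {0..<n}"
  shows "\<exists>p. p permutes {0..<n} \<and> restrict (\<lambda>i. sorted_list_of_set (f ` {0..<n}) ! p i) {0..<n} = f"
proof -
  define S where "S = f ` {0..<n}"
  let ?xs = "sorted_list_of_set S"
  have xs: "bij_betw ((!) ?xs) {..<n} S"
    by (rule bij_betw_nth) (use inj in \<open>auto simp: S_def card_image\<close>)
  define p where "p i = (if i < n then inv_into {..<n} ((!) ?xs) (f i) else i)" for i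
  have "bij_betw (inv_into {..<n} ((!) ?xs) \<circ> f) {0..<n} {..<n}"
    by (rule bij_betw_trans[OF _ bij_betw_inv_into[OF xs]]) (simp add: S_def inj bij_betw_imageI)
  then have "bij_betw (inv_into {..<n} ((!) ?xs) \<circ> f) {0..<n} {0..<n}"
    by (simp add: atLeast0LessThan)
  then have "bij_betw p {0..<n} {0..<n}"
    by (rule bij_betw_cong[THEN iffD1, rotated]) (simp add: p_def)
  then have "p permutes {0..<n}" by (rule bij_imp_permutes) (simp add: p_def)
  moreover have "restrict (\<lambda>i. ?xs ! p i) {0..<n} = f"
  proof
    fix i show "restrict (\<lambda>i. ?xs ! p i) {0..<n} i = f i"
    proof (cases "i < n")
      case True
      then have "f i \<in> S" unfolding S_def by auto
      then show ?thesis
        using True xs unfolding p_def by (simp add: bij_betw_def f_inv_into_f)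
    qed (use f in \<open>auto simp: PiE_def extensional_def\<close>)
  qed
  ultimately show ?thesis unfolding S_def by blast
qed

lemma bij_betw_subset_permutation_injections:
  fixes A :: "'b::linorder set"
  assumes "finite A"
  shows "bij_betw (\<lambda>(S, p). restrict (\<lambda>i. sorted_list_of_set S ! p i) {0..<n})
    (SIGMA S:{S. S \<subseteq> A \<and> card S = n}. {p. p permutes {0..<n}})
    {f \<in> PiE {0..<n} (\<lambda>_. A). inj_on f {0..<n}}"
proof (rule bij_betw_imageI[OF inj_on_permuted_sorted_enumerations[OF assms]], intro equalityI subsetI)
  let ?h = "\<lambda>(S, p). restrict (\<lambda>i. sorted_list_of_set S ! p i) {0..<n}"
  fix f assume "f \<in> ?h ` (SIGMA S:{S. S \<subseteq> A \<and> card S = n}. {p. p permutes {0..<n}})"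
  then obtain S p where f: "f = ?h (S, p)" and S: "S \<subseteq> A" "card S = n" "p permutes {0..<n}"
    by auto
  note enum = sorted_enumeration_permuted[OF finite_subset[OF S(1) assms] S(2,3)]
  show "f \<in> {f \<in> PiE {0..<n} (\<lambda>_. A). inj_on f {0..<n}}"
    using enum S(1) unfolding f by (auto simp: inj_on_def)
next
  let ?h = "\<lambda>(S, p). restrict (\<lambda>i. sorted_list_of_set S ! p i) {0..<n}"
  fix f assume "f \<in> {f \<in> PiE {0..<n} (\<lambda>_. A). inj_on f {0..<n}}"
  then have f: "f \<in> PiE {0..<n} (\<lambda>_. A)" and inj: "inj_on f {0..<n}" by auto
  obtain p where p: "p permutes {0..<n}"
    and eq: "restrict (\<lambda>i. sorted_list_of_set (f ` {0..<n}) ! p i) {0..<n} = f"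
    using injection_eq_permuted_sorted_enumeration[OF f inj] by blast
  have "f ` {0..<n} \<subseteq> A" "card (f ` {0..<n}) = n"
    using f inj by (auto simp: card_image)
  then show "f \<in> ?h ` (SIGMA S:{S. S \<subseteq> A \<and> card S = n}. {p. p permutes {0..<n}})"
    using p eq by (intro image_eqI[where x = "(f ` {0..<n}, p)"]) simp_all
qed

lemma sum_permutations_det_rows:
  fixes a b :: "'b \<Rightarrow> nat \<Rightarrow> 'a::comm_ring_1"
  assumes "length xs = n"
  shows "(\<Sum>p | p permutes {0..<n}. (\<Prod>i = 0..<n. a (xs ! p i) i) * det_rows (map (\<lambda>i. b (xs ! p i)) [0..<n]))
    = det_rows (map a xs) * det_rows (map b xs)"
proof -
  have "det_rows (map (\<lambda>i. b (xs ! p i)) [0..<n]) = signof p * det_rows (map b xs)"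
    if p: "p permutes {0..<n}" for p
  proof -
    have e: "map (\<lambda>i. b (xs ! p i)) [0..<n] = map (\<lambda>i. map b xs ! p i) [0..<length (map b xs)]"
      using assms permutes_in_image[OF p] by auto
    show ?thesis unfolding e by (rule det_rows_permute) (use p assms in simp)
  qed
  then show ?thesis
    unfolding det_rows_leibniz_columns[OF assms] sum_distrib_right
    by (intro sum.cong refl) (simp add: ac_simps)
qed

theorem cauchy_binet:
  fixes a b :: "'b::linorder \<Rightarrow> nat \<Rightarrow> 'a::comm_ring_1"
  assumes "finite A"
  shows "det (mat n n (\<lambda>(i, j). \<Sum>r\<in>A. a r i * b r j)) =
    (\<Sum>S | S \<subseteq> A \<and> card S = n.
       det_rows (map a (sorted_list_of_set S)) * det_rows (map b (sorted_list_of_set S)))"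
proof -
  let ?G = "\<lambda>f. (\<Prod>i = 0..<n. a (f i) i) * det_rows (map (\<lambda>i. b (f i)) [0..<n])"
  let ?F = "PiE {0..<n} (\<lambda>_. A)"
  let ?Subs = "{S. S \<subseteq> A \<and> card S = n}"
  let ?Perms = "{p. p permutes {0..<n}}"
  have G_restrict: "?G (restrict g {0..<n}) = ?G g" for g
    by (intro arg_cong2[where f = "(*)"] prod.cong arg_cong[where f = det_rows] map_cong) auto
  have "(\<Sum>f\<in>?F. ?G f) = (\<Sum>f | f \<in> ?F \<and> inj_on f {0..<n}. ?G f)"
  proof (rule sum.mono_neutral_right)
    show "\<forall>f\<in>?F - {f. f \<in> ?F \<and> inj_on f {0..<n}}. ?G f = 0"
    proof
      fix f assume "f \<in> ?F - {f. f \<in> ?F \<and> inj_on f {0..<n}}"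
      then obtain i j where "i < j" "j < n" "f i = f j"
        unfolding inj_on_def by (auto, metis linorder_neqE_nat)
      then have "det_rows (map (\<lambda>i. b (f i)) [0..<n]) = 0"
        by (intro det_rows_repeated_row[of i j]) auto
      then show "?G f = 0" by simp
    qed
  qed (use assms in \<open>auto intro: finite_PiE\<close>)
  also have "\<dots> = (\<Sum>(S, p)\<in>Sigma ?Subs (\<lambda>_. ?Perms). ?G (restrict (\<lambda>i. sorted_list_of_set S ! p i) {0..<n}))"
    by (subst sum.reindex_bij_betw[OF bij_betw_subset_permutation_injections[OF assms], symmetric])
      (simp only: split_def)
  also have "\<dots> = (\<Sum>(S, p)\<in>Sigma ?Subs (\<lambda>_. ?Perms). ?G (\<lambda>i. sorted_list_of_set S ! p i))"
    by (simp only: G_restrict)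
  also have "\<dots> = (\<Sum>S\<in>?Subs. \<Sum>p\<in>?Perms. ?G (\<lambda>i. sorted_list_of_set S ! p i))"
    by (rule sum.Sigma[symmetric]) (auto simp: finite_permutations intro: finite_subset[of _ "Pow A"] assms)
  also have "\<dots> = (\<Sum>S\<in>?Subs. det_rows (map a (sorted_list_of_set S)) * det_rows (map b (sorted_list_of_set S)))"
    by (intro sum.cong refl sum_permutations_det_rows)
      (auto intro: finite_subset[OF _ assms])
  finally show ?thesis unfolding det_sum_products_expand[OF assms] by simp
qed

lemma snoc_snoc_induct [case_names Nil single snoc_snoc]:
  assumes "P []" "\<And>x. P [x]" "\<And>p a b. P p \<Longrightarrow> P (p @ [a]) \<Longrightarrow> P (p @ [b]) \<Longrightarrow> P (p @ [a, b])"
  shows "P xs"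
proof (induction "length xs" arbitrary: xs rule: less_induct)
  case less
  show ?case
  proof (cases xs rule: rev_cases)
    case (snoc ys b)
    show ?thesis
    proof (cases ys rule: rev_cases)
      case (snoc p a)
      then show ?thesis using \<open>xs = ys @ [b]\<close> assms(3) less by simp
    qed (use snoc assms(2) in simp)
  qed (use assms(1) in simp)
qed

text \<open>The three-term Pluecker relation with the two extra rows chosen as unit vectors: a
  Desnanot--Jacobi type identity for determinants whose rows are shifted by one column.\<close>

lemma det_rows_shift_recurrence:
  fixes \<phi> :: "'b \<Rightarrow> nat \<Rightarrow> 'a::idom"
  shows "det_rows (map \<phi> (p @ [a, b])) * det_rows (map (shift_row \<circ> \<phi>) p) =
    det_rows (map \<phi> (p @ [a])) * det_rows (map (shift_row \<circ> \<phi>) (p @ [b]))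
    - det_rows (map (shift_row \<circ> \<phi>) (p @ [a])) * det_rows (map \<phi> (p @ [b]))"
proof -
  let ?A = "map \<phi> p" and ?n = "length p"
  have cd: "det_rows (?A @ [unit_row 0, unit_row (Suc ?n)]) = (-1) ^ ?n * det_rows (map (shift_row \<circ> \<phi>) p)"
    using det_rows_snoc_unit_row_length[of "?A @ [unit_row 0]"] det_rows_snoc_unit_row_0[of ?A]
    by (simp add: map_map)
  have xc: "det_rows (?A @ [\<phi> x, unit_row 0]) = - ((-1) ^ ?n * det_rows (map (shift_row \<circ> \<phi>) (p @ [x])))" for x
    using det_rows_snoc_unit_row_0[of "?A @ [\<phi> x]"] by (simp add: map_map)
  have xd: "det_rows (?A @ [\<phi> x, unit_row (Suc ?n)]) = det_rows (map \<phi> (p @ [x]))" for x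
    using det_rows_snoc_unit_row_length[of "?A @ [\<phi> x]"] by simp
  have "(-1) ^ ?n * (det_rows (map \<phi> (p @ [a, b])) * det_rows (map (shift_row \<circ> \<phi>) p)
      - (det_rows (map \<phi> (p @ [a])) * det_rows (map (shift_row \<circ> \<phi>) (p @ [b]))
         - det_rows (map (shift_row \<circ> \<phi>) (p @ [a])) * det_rows (map \<phi> (p @ [b])))) = 0"
    using det_rows_pluecker[of ?A "\<phi> a" "\<phi> b" "unit_row 0" "unit_row (Suc ?n)"]
    unfolding cd xc xd by (simp add: algebra_simps)
  then show ?thesis by simp
qed

definition vandermonde_prod :: "'a::comm_ring_1 list \<Rightarrow> 'a" where
  "vandermonde_prod xs = (\<Prod>j<length xs. \<Prod>i<j. xs ! j - xs ! i)"

lemma vandermonde_prod_snoc: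
  "vandermonde_prod (xs @ [x]) = vandermonde_prod xs * (\<Prod>i<length xs. x - xs ! i)"
proof -
  have "vandermonde_prod (xs @ [x])
      = (\<Prod>j<length xs. \<Prod>i<j. (xs @ [x]) ! j - (xs @ [x]) ! i) * (\<Prod>i<length xs. x - (xs @ [x]) ! i)"
    unfolding vandermonde_prod_def by (simp add: nth_append)
  also have "\<dots> = vandermonde_prod xs * (\<Prod>i<length xs. x - xs ! i)"
    unfolding vandermonde_prod_def by (intro arg_cong2[where f = "(*)"] prod.cong) (auto simp: nth_append)
  finally show ?thesis .
qed

lemma vandermonde_prod_nonzero: "distinct xs \<Longrightarrow> vandermonde_prod (xs :: 'a::idom list) \<noteq> 0"
  unfolding vandermonde_prod_def by (auto simp: nth_eq_iff_index_eq)

lemma det_rows_vandermonde: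
  fixes xs :: "'a::idom list"
  assumes "distinct xs" "0 \<notin> set xs"
  shows "det_rows (map (\<lambda>x j. x ^ j) xs) = vandermonde_prod xs"
  using assms
proof (induction xs rule: snoc_snoc_induct)
  case (snoc_snoc p a b)
  let ?\<phi> = "\<lambda>x j. x ^ j"
  have shift: "det_rows (map (shift_row \<circ> ?\<phi>) q) = prod_list q * det_rows (map ?\<phi> q)" for q
    using det_rows_scale_rows[of "\<lambda>x. x" "\<lambda>x j. x ^ j" q] by (simp add: shift_row_def o_def)
  have IH: "det_rows (map ?\<phi> p) = vandermonde_prod p"
    "det_rows (map ?\<phi> (p @ [a])) = vandermonde_prod (p @ [a])"
    "det_rows (map ?\<phi> (p @ [b])) = vandermonde_prod (p @ [b])"
    using snoc_snoc.prems by (intro snoc_snoc.IH; auto)+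
  define A where "A = (\<Prod>i<length p. a - p ! i)"
  define B where "B = (\<Prod>i<length p. b - p ! i)"
  have V: "vandermonde_prod (p @ [a]) = vandermonde_prod p * A"
    "vandermonde_prod (p @ [b]) = vandermonde_prod p * B"
    "vandermonde_prod (p @ [a, b]) = vandermonde_prod p * A * (b - a) * B"
    using vandermonde_prod_snoc[of "p @ [a]" b]
    by (simp_all add: vandermonde_prod_snoc A_def B_def nth_append lessThan_Suc algebra_simps)
  have "det_rows (map ?\<phi> (p @ [a, b])) * (prod_list p * vandermonde_prod p)
      = vandermonde_prod (p @ [a, b]) * (prod_list p * vandermonde_prod p)"
    using det_rows_shift_recurrence[of ?\<phi> p a b] unfolding shift IH V
    by (simp add: algebra_simps)
  moreover have "prod_list p * vandermonde_prod p \<noteq> 0"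
    using snoc_snoc.prems vandermonde_prod_nonzero[of p] by (auto simp: prod_list_zero_iff)
  ultimately show ?case by simp
qed (simp_all add: vandermonde_prod_def)

lemma wseq_Nil [simp]: "wseq w z M m [] = 1"
  and wseq_single [simp]: "wseq w z M m [r] = w m r"
  unfolding wseq_def by simp_all

lemma wseq_snoc_snoc:
  "wseq w z M m (p @ [a, b]) =
    (wseq w z M (m - 1) (p @ [a]) * wseq w z M m (p @ [b]) * zroot M z b
     - wseq w z M m (p @ [a]) * wseq w z M (m - 1) (p @ [b]) * zroot M z a)
    / wseq w z M (m - 1) (p @ [a])"
  unfolding wseq_def by simp

lemma wseq_cong_mod:
  assumes w_per: "\<And>m r. w m r = w (m mod int M) r"
    and "m mod int M = m' mod int M"
  shows "wseq w z M m q = wseq w z M m' q"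
  using assms(2)
proof (induction q arbitrary: m m' rule: snoc_snoc_induct)
  case (single r)
  then show ?case using w_per[of m r] w_per[of m' r] by simp
next
  case (snoc_snoc p a b)
  have pred: "(m - 1) mod int M = (m' - 1) mod int M"
    using snoc_snoc.prems by (metis mod_diff_left_eq)
  show ?case
    unfolding wseq_snoc_snoc snoc_snoc.IH(2,3)[OF snoc_snoc.prems] snoc_snoc.IH(2,3)[OF pred] ..
qed simp

locale hungry_toda =
  fixes M N :: nat and z :: "nat \<Rightarrow> real" and s :: "int \<Rightarrow> real"
    and w :: "int \<Rightarrow> nat \<Rightarrow> real"
  assumes M_pos: "0 < M" and N_pos: "0 < N"
    and z0_pos: "0 < z 0"
    and z_incr: "\<And>i j. i < j \<Longrightarrow> j < N \<Longrightarrow> z i < z j"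
    and s_less: "\<And>t. s t < z 0"
    and w_pos: "\<And>m r. r < N \<Longrightarrow> 0 < w m r"
    and w_per: "\<And>m r. w m r = w (m mod int M) r"
    and positivity: "\<And>m p a b. 0 \<le> m \<Longrightarrow> m < int M \<Longrightarrow>
        sorted_wrt (<) (p @ [a, b]) \<Longrightarrow> b < N \<Longrightarrow>
        wseq w z M m (p @ [a]) * wseq w z M (m+1) (p @ [b]) * zroot M z b
        > wseq w z M (m+1) (p @ [a]) * wseq w z M m (p @ [b]) * zroot M z a"
begin

abbreviation T :: "int \<Rightarrow> int \<Rightarrow> nat \<Rightarrow> real" where
  "T k t n \<equiv> tau w z s M N k t n"

lemma z_pos: "r < N \<Longrightarrow> 0 < z r"
  using z0_pos z_incr[of 0 r] by (cases "r = 0") auto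

lemma s_less_z: "r < N \<Longrightarrow> s t < z r"
  using s_less[of t] z_incr[of 0 r] by (cases "r = 0") auto

lemma zroot_eq_powr: "r < N \<Longrightarrow> zroot M z r = z r powr (1 / real M)"
  unfolding zroot_def using root_powr_inverse[of M "z r"] M_pos z_pos[of r] by simp

lemma wseq_pos: "sorted_wrt (<) q \<Longrightarrow> q \<noteq> [] \<Longrightarrow> \<forall>x\<in>set q. x < N \<Longrightarrow> 0 < wseq w z M m q"
proof (induction q arbitrary: m rule: snoc_snoc_induct)
  case (single r)
  then show ?case using w_pos by simp
next
  case (snoc_snoc p a b)
  define m' where "m' = (m - 1) mod int M"
  have m': "0 \<le> m'" "m' < int M" unfolding m'_def using M_pos by auto
  have shift: "wseq w z M m' = wseq w z M (m - 1)" "wseq w z M (m' + 1) = wseq w z M m"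
    unfolding m'_def by (auto intro!: ext wseq_cong_mod w_per simp: mod_add_left_eq)
  have "wseq w z M (m - 1) (p @ [a]) * wseq w z M m (p @ [b]) * zroot M z b
      > wseq w z M m (p @ [a]) * wseq w z M (m - 1) (p @ [b]) * zroot M z a"
    using positivity[OF m', of p a b] snoc_snoc.prems unfolding shift by simp
  moreover have "0 < wseq w z M (m - 1) (p @ [a])"
    using snoc_snoc.prems by (intro snoc_snoc.IH) (auto simp: sorted_wrt_append)
  ultimately show ?case unfolding wseq_snoc_snoc by simp
qed simp

definition psi :: "nat \<Rightarrow> int \<Rightarrow> real" where
  "psi r m = w m r * z r powr (real_of_int m / real M)"

definition w_chain :: "int \<Rightarrow> nat list \<Rightarrow> real" where
  "w_chain k q = (\<Prod>j<length q. wseq w z M (k + int j) (take (Suc j) q))"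

definition root_power_prod :: "int \<Rightarrow> nat list \<Rightarrow> real" where
  "root_power_prod k q = (\<Prod>j<length q. z (q ! j) powr (real_of_int k / real M))"

lemma w_chain_snoc: "w_chain k (p @ [x]) = w_chain k p * wseq w z M (k + int (length p)) (p @ [x])"
  unfolding w_chain_def length_append_singleton prod.lessThan_Suc
  by (rule arg_cong2[where f = "(*)"]) (auto intro!: prod.cong)

lemma root_power_prod_snoc:
  "root_power_prod k (p @ [x]) = root_power_prod k p * z x powr (real_of_int k / real M)"
  unfolding root_power_prod_def length_append_singleton prod.lessThan_Suc
  by (rule arg_cong2[where f = "(*)"]) (auto intro!: prod.cong simp: nth_append)

lemma w_chain_pos: "sorted_wrt (<) q \<Longrightarrow> \<forall>x\<in>set q. x < N \<Longrightarrow> 0 < w_chain k q"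
  unfolding w_chain_def
  by (intro prod_pos ballI wseq_pos) (auto simp: sorted_wrt_take dest: in_set_takeD)

lemma root_power_prod_pos: "\<forall>x\<in>set q. x < N \<Longrightarrow> 0 < root_power_prod k q"
  unfolding root_power_prod_def using z_pos by (intro prod_pos) (simp add: less_imp_neq[symmetric])

lemma casorati_det:
  "sorted_wrt (<) q \<Longrightarrow> \<forall>x\<in>set q. x < N \<Longrightarrow>
    det_rows (map (\<lambda>r i. psi r (k + int i)) q) = w_chain k q * root_power_prod k q"
proof (induction q arbitrary: k rule: snoc_snoc_induct)
  case (snoc_snoc p a b)
  let ?n = "int (length p)"
  define \<phi> where "\<phi> k' r = (\<lambda>i. psi r (k' + int i))" for k' r
  define \<zeta> where "\<zeta> k' x = z x powr (real_of_int k' / real M)" for k' x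
  define W where "W k' x = wseq w z M (k' + ?n) (p @ [x])" for k' x
  define X where "X k' = w_chain k' p * root_power_prod k' p" for k'
  have bounds: "a < N" "b < N" "\<forall>x\<in>set p. x < N" using snoc_snoc.prems by auto
  have IH: "det_rows (map (\<phi> k') p) = X k'"
    "det_rows (map (\<phi> k') (p @ [a])) = X k' * W k' a * \<zeta> k' a"
    "det_rows (map (\<phi> k') (p @ [b])) = X k' * W k' b * \<zeta> k' b" for k'
    using snoc_snoc.prems unfolding \<phi>_def X_def W_def \<zeta>_def
    by (subst snoc_snoc.IH; auto simp: sorted_wrt_append w_chain_snoc root_power_prod_snoc)+
  have \<zeta>_Suc: "\<zeta> (k' + 1) x = \<zeta> k' x * zroot M z x" if "x < N" for k' x
    unfolding \<zeta>_def zroot_eq_powr[OF that] using z_pos[OF that]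
    by (simp add: powr_add[symmetric] add_divide_distrib)
  have shift: "shift_row \<circ> \<phi> k' = \<phi> (k' + 1)" for k'
    unfolding \<phi>_def shift_row_def by (auto simp: algebra_simps)
  define E where "E = X k * \<zeta> k a * \<zeta> k b
    * (W k a * W (k + 1) b * zroot M z b - W (k + 1) a * W k b * zroot M z a)"
  have "det_rows (map (\<phi> k) (p @ [a, b])) * X (k + 1) = E * X (k + 1)"
    using det_rows_shift_recurrence[of "\<phi> k" p a b]
    unfolding shift IH \<zeta>_Suc[OF bounds(1)] \<zeta>_Suc[OF bounds(2)] E_def by (simp add: algebra_simps)
  moreover have "X (k + 1) \<noteq> 0"
    using w_chain_pos[of p "k + 1"] root_power_prod_pos[of p "k + 1"] snoc_snoc.prems bounds
    by (simp add: X_def sorted_wrt_append)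
  ultimately have det_eq: "det_rows (map (\<phi> k) (p @ [a, b])) = E" by simp
  have "W k a \<noteq> 0"
    using snoc_snoc.prems unfolding W_def
    by (intro less_imp_neq[symmetric] wseq_pos) (auto simp: sorted_wrt_append)
  have r: "wseq w z M (k + ?n + 1) (p @ [a, b])
      = (W k a * W (k + 1) b * zroot M z b - W (k + 1) a * W k b * zroot M z a) / W k a"
    using wseq_snoc_snoc[of w z M "k + ?n + 1" p a b] unfolding W_def by (simp add: algebra_simps)
  have wc: "w_chain k (p @ [a, b]) = w_chain k p * W k a * wseq w z M (k + ?n + 1) (p @ [a, b])"
    using w_chain_snoc[of k "p @ [a]" b] unfolding W_def by (simp add: w_chain_snoc algebra_simps)
  have rp: "root_power_prod k (p @ [a, b]) = root_power_prod k p * \<zeta> k a * \<zeta> k b"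
    using root_power_prod_snoc[of k "p @ [a]" b] unfolding \<zeta>_def by (simp add: root_power_prod_snoc)
  have "w_chain k (p @ [a, b]) * root_power_prod k (p @ [a, b]) = E"
    using \<open>W k a \<noteq> 0\<close> unfolding wc rp r E_def X_def by (simp add: field_simps)
  with det_eq show ?case unfolding \<phi>_def by simp
qed (simp_all add: w_chain_def root_power_prod_def psi_def)

definition shift_prod :: "int \<Rightarrow> nat \<Rightarrow> real" where
  "shift_prod t r = gprod (\<lambda>\<tau>. z r - s \<tau>) t"

definition moment :: "int \<Rightarrow> int \<Rightarrow> nat \<Rightarrow> real" where
  "moment t m j = (\<Sum>r<N. psi r m * shift_prod t r * z r ^ j)"

definition moment_row :: "int \<Rightarrow> int \<Rightarrow> nat \<Rightarrow> nat \<Rightarrow> real" where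
  "moment_row t k i = (\<lambda>j. moment t (k + int i) j)"

lemma shift_prod_pos: "r < N \<Longrightarrow> 0 < shift_prod t r"
  unfolding shift_prod_def gprod_def using s_less_z[of r]
  by (auto intro!: prod_pos simp: less_diff_eq)

lemma shift_prod_Suc: assumes "r < N" shows "shift_prod (t + 1) r = shift_prod t r * (z r - s t)"
proof (cases "0 \<le> t")
  case True
  then have "{0..<t + 1} = insert t {0..<t}" by auto
  then show ?thesis using True unfolding shift_prod_def gprod_def by simp
next
  case False
  then have "{t..<0} = insert t {t + 1..<0}" by auto
  then show ?thesis
    using False s_less_z[OF assms, of t] unfolding shift_prod_def gprod_def by simp
qed

lemma psi_add_M: assumes "r < N" shows "psi r (m + int M) = z r * psi r m"
proof -
  have "w (m + int M) r = w m r" using w_per[of "m + int M" r] w_per[of m r] by simp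
  moreover have "z r powr (real_of_int (m + int M) / real M) = z r powr (real_of_int m / real M) * z r"
    using M_pos z_pos[OF assms] by (simp add: add_divide_distrib powr_add)
  ultimately show ?thesis unfolding psi_def by simp
qed

lemma moment_Suc_time: "moment (t + 1) m j = moment t m (Suc j) - s t * moment t m j"
  unfolding moment_def sum_distrib_left sum_subtractf[symmetric]
  by (intro sum.cong refl) (simp add: shift_prod_Suc, simp add: algebra_simps)

lemma moment_add_M: "moment t (m + int M) j = moment t m (Suc j)"
  unfolding moment_def by (intro sum.cong refl) (simp add: psi_add_M algebra_simps)

definition tau_term :: "int \<Rightarrow> int \<Rightarrow> nat \<Rightarrow> nat list \<Rightarrow> real" where
  "tau_term k t n rs = (\<Prod>j<n. wseq w z M (k + int j) (take (Suc j) rs))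
        * (\<Prod>j<n. z (rs ! j) powr (real_of_int k / real M) * gprod (\<lambda>\<tau>. z (rs ! j) - s \<tau>) t)
        * (\<Prod>j<n. \<Prod>i<j. z (rs ! j) - z (rs ! i))"

lemma tau_eq_sum_tau_term:
  "T k t n = (\<Sum>S | S \<subseteq> {..<N} \<and> card S = n. tau_term k t n (sorted_list_of_set S))"
proof -
  consider "n = 0" | "N < n" | "n \<noteq> 0" "\<not> N < n" by linarith
  then show ?thesis
  proof cases
    case 1
    then have "{S. S \<subseteq> {..<N} \<and> card S = n} = {{}}" by (auto dest: finite_subset)
    then show ?thesis using 1 unfolding tau_def tau_term_def by simp
  next
    case 2
    then have empty: "{S. S \<subseteq> {..<N} \<and> card S = n} = {}"
      by (auto dest!: card_mono[OF finite_lessThan[of N]])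
    show ?thesis using 2 unfolding tau_def empty by simp
  qed (simp add: tau_def tau_term_def Let_def)
qed

lemma sorted_subset_enum:
  assumes "S \<subseteq> {..<N}" "card S = n"
  shows "sorted_wrt (<) (sorted_list_of_set S)" "\<forall>x\<in>set (sorted_list_of_set S). x < N"
    "length (sorted_list_of_set S) = n" "distinct (sorted_list_of_set S)"
  using assms finite_subset[OF assms(1)] by auto

lemma z_sorted_less:
  assumes "sorted_wrt (<) q" "\<forall>x\<in>set q. x < N" "i < j" "j < length q"
  shows "z (q ! i) < z (q ! j)"
  using assms by (intro z_incr) (auto simp: sorted_wrt_iff_nth_less)

lemma tau_term_eq_det_rows:
  assumes "S \<subseteq> {..<N}" "card S = n"
  shows "tau_term k t n (sorted_list_of_set S) =
    det_rows (map (\<lambda>r i. shift_prod t r * psi r (k + int i)) (sorted_list_of_set S))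
    * det_rows (map (\<lambda>r j. z r ^ j) (sorted_list_of_set S))"
proof -
  define q where "q = sorted_list_of_set S"
  note q = sorted_subset_enum[OF assms, folded q_def]
  have "distinct (map z q)"
  proof (subst distinct_conv_nth, intro allI impI)
    fix i j assume "i < length (map z q)" "j < length (map z q)" "i \<noteq> j"
    then show "map z q ! i \<noteq> map z q ! j"
      using z_sorted_less[OF q(1,2), of i j] z_sorted_less[OF q(1,2), of j i]
      by (cases "i < j") auto
  qed
  moreover have "0 \<notin> set (map z q)" using q(2) z_pos by force
  ultimately have "det_rows (map (\<lambda>r j. z r ^ j) q) = vandermonde_prod (map z q)"
    using det_rows_vandermonde[of "map z q"] by (simp add: o_def)
  also have "\<dots> = (\<Prod>j<n. \<Prod>i<j. z (q ! j) - z (q ! i))"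
    unfolding vandermonde_prod_def using q(3) by simp
  finally have vandermonde: "det_rows (map (\<lambda>r j. z r ^ j) q) = (\<Prod>j<n. \<Prod>i<j. z (q ! j) - z (q ! i))" .
  have "prod_list (map (shift_prod t) q) * root_power_prod k q
      = (\<Prod>j<n. z (q ! j) powr (real_of_int k / real M) * gprod (\<lambda>\<tau>. z (q ! j) - s \<tau>) t)"
    unfolding prod.list_conv_set_nth root_power_prod_def shift_prod_def prod.distrib
    by (simp add: q(3) atLeast0LessThan mult.commute)
  then have "det_rows (map (\<lambda>r i. shift_prod t r * psi r (k + int i)) q)
      = (\<Prod>j<n. wseq w z M (k + int j) (take (Suc j) q))
        * (\<Prod>j<n. z (q ! j) powr (real_of_int k / real M) * gprod (\<lambda>\<tau>. z (q ! j) - s \<tau>) t)"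
    unfolding det_rows_scale_rows casorati_det[OF q(1,2)] w_chain_def q(3) by simp
  with vandermonde show ?thesis unfolding tau_term_def q_def[symmetric] by simp
qed

lemma tau_eq_det_rows: "T k t n = det_rows (map (moment_row t k) [0..<n])"
proof -
  have "det_rows (map (moment_row t k) [0..<n])
      = det (mat n n (\<lambda>(i, j). \<Sum>r\<in>{..<N}. (shift_prod t r * psi r (k + int i)) * z r ^ j))"
    unfolding det_rows_def moment_row_def moment_def
    by (intro arg_cong[of _ _ det] eq_matI) (auto intro!: sum.cong simp: mult_ac)
  also have "\<dots> = T k t n"
    unfolding cauchy_binet[OF finite_lessThan] tau_eq_sum_tau_term
    by (intro sum.cong refl) (simp add: tau_term_eq_det_rows)
  finally show ?thesis ..
qed

lemma tau_term_pos:
  assumes "S \<subseteq> {..<N}" "card S = n"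
  shows "0 < tau_term k t n (sorted_list_of_set S)"
proof -
  define q where "q = sorted_list_of_set S"
  note q = sorted_subset_enum[OF assms, folded q_def]
  have "0 < (\<Prod>j<n. wseq w z M (k + int j) (take (Suc j) q))"
    using w_chain_pos[OF q(1,2)] unfolding w_chain_def q(3) .
  moreover have "0 < (\<Prod>j<n. z (q ! j) powr (real_of_int k / real M) * gprod (\<lambda>\<tau>. z (q ! j) - s \<tau>) t)"
    using q z_pos shift_prod_pos unfolding shift_prod_def
    by (intro prod_pos) (simp add: less_imp_neq[symmetric])
  moreover have "0 < (\<Prod>j<n. \<Prod>i<j. z (q ! j) - z (q ! i))"
    using z_sorted_less[OF q(1,2)] q(3) by (intro prod_pos) simp
  ultimately show ?thesis unfolding tau_term_def q_def[symmetric] by simp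
qed

lemma tau_pos: "n \<le> N \<Longrightarrow> 0 < T k t n"
proof (cases "n = 0")
  case False
  assume "n \<le> N"
  then have "{..<n} \<in> {S. S \<subseteq> {..<N} \<and> card S = n}" by auto
  then have "{S. S \<subseteq> {..<N} \<and> card S = n} \<noteq> {}" by blast
  with finite_subset[of "{S. S \<subseteq> {..<N} \<and> card S = n}" "Pow {..<N}"] show ?thesis
    unfolding tau_eq_sum_tau_term by (rule sum_pos) (auto intro: tau_term_pos)
qed (simp add: tau_def)

lemma moment_rows_Suc_k: "map (moment_row t (k + 1)) [0..<m] = map (moment_row t k) [1..<Suc m]"
proof -
  have "[1..<Suc m] = map Suc [0..<m]" by (simp add: map_Suc_upt)
  then show ?thesis unfolding moment_row_def by (simp add: algebra_simps del: upt_Suc)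
qed

lemma moment_rows_add_M:
  "map (moment_row t (k + int M)) [0..<m] = map shift_row (map (moment_row t k) [0..<m])"
  unfolding moment_row_def shift_row_def by (simp add: moment_add_M[symmetric] algebra_simps del: upt_Suc)

lemma moment_rows_Suc_t:
  "map (\<lambda>v j. v (Suc j) - s t * v j) (map (moment_row t k) [0..<m]) = map (moment_row (t + 1) k) [0..<m]"
  unfolding moment_row_def by (simp add: moment_Suc_time fun_eq_iff del: upt_Suc)

lemma tau_eq_0: "N < n \<Longrightarrow> T k t n = 0"
  unfolding tau_def by simp

lemma tau_nonzero: "n \<le> N \<Longrightarrow> T k t n \<noteq> 0"
  using tau_pos by (metis less_irrefl)

lemma tau_nonneg: "0 \<le> T k t n"
  using tau_pos[of n k t] tau_eq_0[of n k t] by (cases "n \<le> N") auto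

lemma tau_Suc_k: "T (k + 1) t m = det_rows (map (moment_row t k) [1..<Suc m])"
  unfolding tau_eq_det_rows moment_rows_Suc_k ..

lemma tau_add_M: "T (k + int M) t m = det_rows (map shift_row (map (moment_row t k) [0..<m]))"
  unfolding tau_eq_det_rows moment_rows_add_M ..

lemma tau_Suc_t:
  "T k (t + 1) m = (-1) ^ m * det_rows (map (moment_row t k) [0..<m] @ [geometric_row (s t)])"
  unfolding det_rows_snoc_geometric_row moment_rows_Suc_t tau_eq_det_rows by simp

lemma tau_add_M_Suc_t:
  "T (k + int M) (t + 1) m
    = (-1) ^ m * det_rows (map shift_row (map (moment_row t k) [0..<m]) @ [geometric_row (s t)])"
  unfolding tau_Suc_t moment_rows_add_M ..

lemma tau_Suc_k_Suc_t:
  "T (k + 1) (t + 1) m = (-1) ^ m * det_rows (map (moment_row t k) [1..<Suc m] @ [geometric_row (s t)])"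
  unfolding tau_Suc_t moment_rows_Suc_k ..

lemma tau_one_Suc_t: "T k (t + 1) 1 = T (k + int M) t 1 - s t * T k t 1"
  unfolding tau_eq_det_rows by (simp add: moment_row_def moment_Suc_time moment_add_M[symmetric])

text \<open>Both bilinear equations for \<open>\<tau>\<close> are three-term Pluecker relations: all \<open>\<tau>\<close>'s involved are
  minors of one matrix of moment rows, bordered by a unit row and a geometric row.\<close>

lemma tau_bilinear_Suc_k:
  "T k t (n + 1) * T (k + 1) (t + 1) (n + 1)
    = T k (t + 1) (n + 1) * T (k + 1) t (n + 1) + T k t (n + 2) * T (k + 1) (t + 1) n"
proof -
  note upt_Suc [simp del]
  define v where "v = moment_row t k"
  define A where "A = map v [1..<Suc n]"
  define b where "b = v (Suc n)"
  define \<sigma> where "\<sigma> = geometric_row (s t)"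
  define e :: "nat \<Rightarrow> real" where "e = unit_row (Suc n)"
  have lA: "length A = n" unfolding A_def by simp
  have L3: "map v [1..<Suc (Suc n)] = A @ [b]" unfolding A_def b_def by (simp add: upt_Suc_append)
  have L1: "map v [0..<Suc (Suc n)] = v 0 # A @ [b]" using L3 by (simp add: upt_conv_Cons)
  have L2: "map v [0..<Suc n] = v 0 # A" unfolding A_def by (simp add: upt_conv_Cons)
  have X1: "T k t (n + 2) = (-1) ^ n * det_rows (A @ [v 0, b])"
    using tau_eq_det_rows[of k t "n + 2"] det_rows_move[of "[]" "v 0" A "[b]"]
    unfolding v_def[symmetric] lA by (simp add: L1[simplified])
  have X2: "T (k + 1) (t + 1) n = (-1) ^ n * det_rows (A @ [\<sigma>, e])"
    unfolding tau_Suc_k_Suc_t v_def[symmetric] A_def[symmetric] \<sigma>_def[symmetric] e_def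
    using det_rows_snoc_unit_row_length[of "A @ [\<sigma>]"] lA by simp
  have X3: "T k t (n + 1) = (-1) ^ n * det_rows (A @ [v 0, e])"
    using tau_eq_det_rows[of k t "n + 1"] det_rows_move[of "[]" "v 0" A "[]"]
      det_rows_snoc_unit_row_length[of "A @ [v 0]"] lA
    unfolding v_def[symmetric] e_def by (simp add: L2[simplified])
  have X4: "T (k + 1) (t + 1) (n + 1) = (-1) ^ (n + 1) * det_rows (A @ [b, \<sigma>])"
    using tau_Suc_k_Suc_t[of k t "n + 1"] unfolding v_def[symmetric] \<sigma>_def[symmetric]
    by (simp add: L3[simplified])
  have X5: "T k (t + 1) (n + 1) = (-1) ^ (n + 1) * ((-1) ^ n * det_rows (A @ [v 0, \<sigma>]))"
    using tau_Suc_t[of k t "n + 1"] det_rows_move[of "[]" "v 0" A "[\<sigma>]"] lA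
    unfolding v_def[symmetric] \<sigma>_def[symmetric] by (simp add: L2[simplified])
  have X6: "T (k + 1) t (n + 1) = det_rows (A @ [b, e])"
    using tau_Suc_k[of k t "n + 1"] det_rows_snoc_unit_row_length[of "A @ [b]"] lA
    unfolding v_def[symmetric] e_def by (simp add: L3[simplified])
  show ?thesis unfolding X1 X2 X3 X4 X5 X6
    using det_rows_pluecker[of A "v 0" b \<sigma> e] by (cases "even n") (simp_all add: algebra_simps)
qed

lemma tau_bilinear_add_M:
  "T k (t + 1) (n + 2) * T (k + int M) t (n + 1)
    = - s t * T k t (n + 2) * T (k + int M) (t + 1) (n + 1) + T (k + int M) t (n + 2) * T k (t + 1) (n + 1)"
proof -
  note upt_Suc [simp del]
  define v where "v = moment_row t k"
  define A where "A = map v [0..<Suc n]"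
  define b where "b = v (Suc n)"
  define \<sigma> where "\<sigma> = geometric_row (s t)"
  define e0 :: "nat \<Rightarrow> real" where "e0 = unit_row 0"
  define e :: "nat \<Rightarrow> real" where "e = unit_row (Suc (Suc n))"
  have lA: "length A = Suc n" unfolding A_def by simp
  have L1: "map v [0..<Suc (Suc n)] = A @ [b]" unfolding A_def b_def by (simp add: upt_Suc_append)
  have Y1: "T k (t + 1) (n + 2) = (-1) ^ n * det_rows (A @ [b, \<sigma>])"
    using tau_Suc_t[of k t "Suc (Suc n)"] unfolding v_def[symmetric] L1 \<sigma>_def by simp
  have Y2: "T (k + int M) t (n + 1) = (-1) ^ (n + 1) * det_rows (A @ [e0, e])"
  proof -
    have "det_rows (A @ [e0, e]) = (-1) ^ (n + 1) * det_rows (map shift_row A)"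
      using det_rows_snoc_unit_row_length[of "A @ [e0]"] det_rows_snoc_unit_row_0[of A] lA
      unfolding e0_def e_def by simp
    then show ?thesis using tau_add_M[of k t "n + 1"] unfolding v_def[symmetric] by (simp add: A_def)
  qed
  have Y3: "T k t (n + 2) = det_rows (A @ [b, e])"
    using tau_eq_det_rows[of k t "n + 2"] det_rows_snoc_unit_row_length[of "A @ [b]"] lA
    unfolding v_def[symmetric] e_def by (simp add: L1[simplified])
  have Y4: "s t * T (k + int M) (t + 1) (n + 1) = - det_rows (A @ [\<sigma>, e0])"
  proof -
    have "shift_row \<sigma> = (\<lambda>j. s t * \<sigma> j)" unfolding shift_row_def \<sigma>_def geometric_row_def by simp
    then have "det_rows (A @ [\<sigma>, e0]) = (-1) ^ n * (s t * det_rows (map shift_row A @ [\<sigma>]))"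
      using det_rows_snoc_unit_row_0[of "A @ [\<sigma>]"] lA det_rows_snoc_scaled[of "map shift_row A" "s t" \<sigma>]
      unfolding e0_def by simp
    then show ?thesis using tau_add_M_Suc_t[of k t "n + 1"] unfolding v_def[symmetric] \<sigma>_def[symmetric]
      by (cases "even n") (simp_all add: algebra_simps A_def)
  qed
  have Y5: "T (k + int M) t (n + 2) = (-1) ^ n * det_rows (A @ [b, e0])"
  proof -
    have "det_rows (A @ [b, e0]) = (-1) ^ n * det_rows (map shift_row (A @ [b]))"
      using det_rows_snoc_unit_row_0[of "A @ [b]"] lA unfolding e0_def by simp
    then show ?thesis using tau_add_M[of k t "n + 2"] unfolding v_def[symmetric]
      by (simp add: L1[simplified])
  qed
  have Y6: "T k (t + 1) (n + 1) = (-1) ^ (n + 1) * det_rows (A @ [\<sigma>, e])"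
    using tau_Suc_t[of k t "n + 1"] det_rows_snoc_unit_row_length[of "A @ [\<sigma>]"] lA
    unfolding v_def[symmetric] \<sigma>_def[symmetric] e_def by (simp add: A_def)
  have "- s t * T k t (n + 2) * T (k + int M) (t + 1) (n + 1)
      = - T k t (n + 2) * (s t * T (k + int M) (t + 1) (n + 1))" by simp
  also have "\<dots> = det_rows (A @ [b, e]) * det_rows (A @ [\<sigma>, e0])" unfolding Y3 Y4 by simp
  finally have Y34: "- s t * T k t (n + 2) * T (k + int M) (t + 1) (n + 1)
      = det_rows (A @ [b, e]) * det_rows (A @ [\<sigma>, e0])" .
  show ?thesis unfolding Y34 Y1 Y2 Y5 Y6
    using det_rows_pluecker[of A b \<sigma> e0 e] by (cases "even n") (simp_all add: algebra_simps)
qed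

lemma ev_etv_last: "ev w z s M N k t (N - 1) = 0" "etv w z s M N k t (N - 1) = 0"
  using tau_eq_0[of "N - 1 + 2" k t] N_pos unfolding ev_def etv_def by simp_all

lemma qv_Suc_t:
  assumes "n < N"
  shows "qv w z s M N k (t + 1) n = dv w z s M N k t n + etv w z s M N k t n"
proof -
  define P0 P1 Q0 Q1 R1 R2 S1 where "P0 = T k (t + 1) n" "P1 = T k (t + 1) (n + 1)"
    "Q0 = T (k + 1) (t + 1) n" "Q1 = T (k + 1) (t + 1) (n + 1)" "R1 = T k t (n + 1)"
    "R2 = T k t (n + 2)" "S1 = T (k + 1) t (n + 1)"
  have nz: "P1 \<noteq> 0" "Q0 \<noteq> 0" "R1 \<noteq> 0"
    using assms unfolding P0_P1_Q0_Q1_R1_R2_S1_def by (simp_all add: tau_nonzero)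
  have "R1 * Q1 = P1 * S1 + R2 * Q0"
    unfolding P0_P1_Q0_Q1_R1_R2_S1_def by (rule tau_bilinear_Suc_k)
  then have "P0 * Q1 / (P1 * Q0) = P0 * P1 * S1 / (R1 * P1 * Q0) + R2 * P0 / (R1 * P1)"
    using nz by (simp add: field_simps)
  then show ?thesis
    unfolding qv_def dv_def etv_def P0_P1_Q0_Q1_R1_R2_S1_def[symmetric] using nz by (simp add: field_simps)
qed

lemma ev_Suc_t:
  assumes "n < N"
  shows "ev w z s M N k (t + 1) n = fv w z s M N k t n + etv w z s M N (k + int M) t n"
proof -
  define E G P1 H1 R2 K1 K2 where "E = T k (t + 1) (n + 2)" "G = T (k + int M) (t + 1) n"
    "P1 = T k (t + 1) (n + 1)" "H1 = T (k + int M) (t + 1) (n + 1)" "R2 = T k t (n + 2)"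
    "K1 = T (k + int M) t (n + 1)" "K2 = T (k + int M) t (n + 2)"
  have nz: "P1 \<noteq> 0" "H1 \<noteq> 0" "K1 \<noteq> 0"
    using assms unfolding E_G_P1_H1_R2_K1_K2_def by (simp_all add: tau_nonzero)
  have bilinear: "E * K1 = - s t * R2 * H1 + K2 * P1"
    unfolding E_G_P1_H1_R2_K1_K2_def by (rule tau_bilinear_add_M)
  have "E * G / (P1 * H1) = G * (E * K1) / (P1 * H1 * K1)" using nz by simp
  also have "\<dots> = - s t * (R2 * G / (P1 * K1)) + K2 * G / (K1 * H1)"
    unfolding bilinear using nz by (simp add: field_simps)
  finally have "E * G / (P1 * H1) = - s t * (R2 * G / (P1 * K1)) + K2 * G / (K1 * H1)" .
  then show ?thesis
    unfolding ev_def fv_def etv_def E_G_P1_H1_R2_K1_K2_def[symmetric] using nz by (simp add: field_simps)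
qed

lemma
  assumes "n + 1 < N"
  shows dv_Suc: "dv w z s M N k t (n + 1)
      = dv w z s M N k t n * qv w z s M N k t (n + 1) / qv w z s M N k (t + 1) n"
    and fv_Suc: "fv w z s M N k t (n + 1)
      = fv w z s M N k t n * ev w z s M N k t (n + 1) / ev w z s M N k (t + 1) n"
    and etv_Suc_k: "etv w z s M N (k + 1) t n
      = etv w z s M N k t n * qv w z s M N k t (n + 1) / qv w z s M N k (t + 1) n"
    and etv_Suc: "etv w z s M N k t (n + 1)
      = etv w z s M N (k + int M) t n * ev w z s M N k t (n + 1) / ev w z s M N k (t + 1) n"
  using assms unfolding dv_def qv_def fv_def ev_def etv_def by (simp_all add: tau_nonzero field_simps)

lemma prod_qv_0: "(\<Prod>j<m. qv w z s M N (k + int j) t 0) = T (k + int m) t 1 / T k t 1"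
proof (induction m)
  case (Suc m)
  have "qv w z s M N (k + int m) t 0 = T (k + int (Suc m)) t 1 / T (k + int m) t 1"
    unfolding qv_def by (simp add: tau_def algebra_simps)
  then show ?case using Suc tau_nonzero[of 1 "k + int m" t] N_pos by simp
qed (use tau_nonzero[of 1 k t] N_pos in simp)

lemma dv_0: "dv w z s M N k t 0 = qv w z s M N k t 0"
  unfolding dv_def qv_def by (simp add: tau_def)

lemma
  fixes k t :: int
  defines "P \<equiv> \<Prod>j<M. qv w z s M N (k + int j) t 0"
  shows fv_0: "fv w z s M N k t 0 = - ev w z s M N k t 0 * s t / (P - s t)"
    and etv_0: "etv w z s M N k t 0 = ev w z s M N k t 0 * P / (P - s t)"
proof -
  have nz: "T k t 1 \<noteq> 0" "T k (t + 1) 1 \<noteq> 0" "T (k + int M) t 1 \<noteq> 0"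
    using N_pos by (simp_all add: tau_nonzero)
  have P: "P = T (k + int M) t 1 / T k t 1" unfolding P_def by (rule prod_qv_0)
  have P_s: "P - s t = T k (t + 1) 1 / T k t 1"
    unfolding P tau_one_Suc_t using nz by (simp add: field_simps)
  show "fv w z s M N k t 0 = - ev w z s M N k t 0 * s t / (P - s t)"
    unfolding P_s fv_def ev_def using nz by (simp add: tau_def field_simps)
  show "etv w z s M N k t 0 = ev w z s M N k t 0 * P / (P - s t)"
    unfolding P_s unfolding P etv_def ev_def using nz by (simp add: tau_def field_simps)
qed

lemma
  assumes "n < N"
  shows qv_pos: "0 < qv w z s M N k t n" and dv_pos: "0 < dv w z s M N k t n"
  using assms unfolding qv_def dv_def by (simp_all add: tau_pos)

lemma
  assumes "n + 1 < N"
  shows ev_pos: "0 < ev w z s M N k t n" and etv_pos: "0 < etv w z s M N k t n"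
  using assms unfolding ev_def etv_def by (simp_all add: tau_pos)

lemma fv_nonneg:
  assumes "s t \<le> 0" "n < N"
  shows "0 \<le> fv w z s M N k t n"
  using assms unfolding fv_def
  by (intro mult_nonneg_nonneg divide_nonneg_pos) (simp_all add: tau_pos tau_nonneg)

end

theorem corollary1:
  fixes M N :: nat and z :: "nat \<Rightarrow> real" and s :: "int \<Rightarrow> real"
    and w :: "int \<Rightarrow> nat \<Rightarrow> real"
  assumes M_pos: "0 < M" and N_pos: "0 < N"
    and z0_pos: "0 < z 0"
    and z_incr: "\<And>i j. i < j \<Longrightarrow> j < N \<Longrightarrow> z i < z j"
    and s_less: "\<And>t. s t < z 0"
    and w_pos: "\<And>m r. r < N \<Longrightarrow> 0 < w m r"
    and w_per: "\<And>m r. w m r = w (m mod int M) r"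
    and positivity: "\<And>m p a b. 0 \<le> m \<Longrightarrow> m < int M \<Longrightarrow>
        sorted_wrt (<) (p @ [a, b]) \<Longrightarrow> b < N \<Longrightarrow>
        wseq w z M m (p @ [a]) * wseq w z M (m+1) (p @ [b]) * zroot M z b
        > wseq w z M (m+1) (p @ [a]) * wseq w z M m (p @ [b]) * zroot M z a"
  shows
   "(\<forall>k t. ev w z s M N k t (N-1) = 0 \<and> etv w z s M N k t (N-1) = 0)
    \<and> (\<forall>k t n. n < N \<longrightarrow>
         qv w z s M N k (t+1) n = dv w z s M N k t n + etv w z s M N k t n
       \<and> ev w z s M N k (t+1) n = fv w z s M N k t n + etv w z s M N (k + int M) t n)
    \<and> (\<forall>k t n. n + 1 < N \<longrightarrow>
         dv w z s M N k t (n+1) = dv w z s M N k t n * qv w z s M N k t (n+1) / qv w z s M N k (t+1) n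
       \<and> fv w z s M N k t (n+1) = fv w z s M N k t n * ev w z s M N k t (n+1) / ev w z s M N k (t+1) n
       \<and> etv w z s M N (k+1) t n = etv w z s M N k t n * qv w z s M N k t (n+1) / qv w z s M N k (t+1) n
       \<and> etv w z s M N k t (n+1) = etv w z s M N (k + int M) t n * ev w z s M N k t (n+1) / ev w z s M N k (t+1) n)
    \<and> (\<forall>k t. dv w z s M N k t 0 = qv w z s M N k t 0
       \<and> fv w z s M N k t 0 = - ev w z s M N k t 0 * s t
            / ((\<Prod>j<M. qv w z s M N (k + int j) t 0) - s t)
       \<and> etv w z s M N k t 0 = ev w z s M N k t 0 * (\<Prod>j<M. qv w z s M N (k + int j) t 0)
            / ((\<Prod>j<M. qv w z s M N (k + int j) t 0) - s t))
    \<and> (\<forall>k t n. n < N \<longrightarrow> 0 < qv w z s M N k t n \<and> 0 < dv w z s M N k t n)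
    \<and> (\<forall>k t n. n + 1 < N \<longrightarrow> 0 < ev w z s M N k t n \<and> 0 < etv w z s M N k t n)
    \<and> ((\<forall>t. s t \<le> 0) \<longrightarrow> (\<forall>k t n. n < N \<longrightarrow> 0 \<le> fv w z s M N k t n))"
proof -
  interpret hungry_toda M N z s w
    by unfold_locales (fact assms)+
  show ?thesis
    by (intro conjI allI impI)
      (blast intro: ev_etv_last qv_Suc_t ev_Suc_t dv_Suc fv_Suc etv_Suc_k etv_Suc dv_0 fv_0 etv_0
        qv_pos dv_pos ev_pos etv_pos fv_nonneg)+
qed

end
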